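(* Let $n\in\mathbb{N}$, $\mathbb{K}\in\{\mathbb{R},\mathbb{C}\}$, let $\boldsymbol a=\{a_k\}_{k=0}^n\subset\mathbb{K}$ and $f_{\boldsymbol a,n}(x)=\sum_{k=0}^n a_kT_k(x)$ for $x\in[-1,1]$. There exists a constant $C>0$ such that, for $\epsilon>0$: (i) if $\mathbb{K}=\mathbb{R}$, there exist ReLU neural networks $\Phi_{\boldsymbol a,n,\epsilon}\in\mathcal{NN}_{L,13,1,1}$ with \[ L\le C\Big(n^2+n\log\tfrac1\epsilon+n\log\big(\max_{k=0,\dots,n}|a_k|\big)\Big)\quad\text{as }\epsilon\to0 \] such that $\|f_{\boldsymbol a,n}-\Phi_{\boldsymbol a,n,\epsilon}\|_{L^\infty((-1,1))}\le\epsilon$; (ii) if $\mathbb{K}=\mathbb{C}$, there exist ReLU neural networks $\Phi_{\boldsymbol a,n,\epsilon}\in\mathcal{NN}_{L,15,1,2}$ with $L$ bounded as in (i) such that $\|f_{\boldsymbol a,n}-(\Phi_{\boldsymbol a,n,\epsilon})_1-\imath(\Phi_{\boldsymbol a,n,\epsilon})_2\|_{L^\infty((-1,1))}\le\epsilon$, where $(\cdot)_1,(\cdot)_2$ denote the first and second outputs. In either case all weights are bounded in absolute value by $\max\{\max_{k=0,\dots,n}|a_k|,2\}$.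
   Context: $T_n(x)=\cos(n\arccos x)$, $x\in[-1,1]$, is the $n$-th Chebyshev polynomial of the first kind. ReLU networks: $\varrho(x)=\max\{x,0\}$ componentwise; $\mathcal{NN}_{L,M,\ell_0,\ell_L}$ is the set of maps $\mathbb{R}^{\ell_0}\to\mathbb{R}^{\ell_L}$ of the form $\mathcal A_{L'}\circ\varrho\circ\cdots\circ\varrho\circ\mathcal A_1$ (or $\mathcal A_1$), affine $\mathcal A_k(\mathbf x)=\mathbf W_k\mathbf x+\mathbf b_k$, depth $L'\le L$, width $\max_k\ell_k\le M$; weights are the entries of $\mathbf W_k,\mathbf b_k$. *)

theory Defs
  imports "HOL-Analysis.Analysis"
begin

definition cheb :: "nat \<Rightarrow> real \<Rightarrow> real" where
  "cheb n x = cos (real n * arccos x)"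

definition relu :: "real \<Rightarrow> real" where
  "relu t = max t 0"

text \<open>A layer is an affine map x |-> W x + b, with W given as a list of rows.
  A network is the list of its layers [A_1, ..., A_L] (first layer first).\<close>
type_synonym layer = "real list list \<times> real list"

definition affine :: "layer \<Rightarrow> real list \<Rightarrow> real list" where
  "affine l x = map2 (+) (map (\<lambda>row. sum_list (map2 (*) row x)) (fst l)) (snd l)"

fun realize :: "layer list \<Rightarrow> real list \<Rightarrow> real list" where
  "realize [] x = x"
| "realize [l] x = affine l x"
| "realize (l # l' # ls) x = realize (l' # ls) (map relu (affine l x))"

fun arch :: "nat \<Rightarrow> layer list \<Rightarrow> nat \<Rightarrow> bool" where
  "arch d0 [] dL = False"
| "arch d0 [(W, b)] dL =
     (length W = dL \<and> length b = dL \<and> (\<forall>r\<in>set W. length r = d0))"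
| "arch d0 ((W, b) # l' # ls) dL =
     (length b = length W \<and> (\<forall>r\<in>set W. length r = d0) \<and> arch (length W) (l' # ls) dL)"

definition width :: "nat \<Rightarrow> layer list \<Rightarrow> nat" where
  "width d0 \<Phi> = Max (insert d0 (set (map (\<lambda>l. length (fst l)) \<Phi>)))"

definition depth :: "layer list \<Rightarrow> nat" where
  "depth \<Phi> = length \<Phi>"

definition weights :: "layer list \<Rightarrow> real list" where
  "weights \<Phi> = concat (map (\<lambda>l. concat (fst l) @ snd l) \<Phi>)"

text \<open>The class NN_{L,M,l0,lL} (as networks, i.e. with their weights).\<close>
definition NN :: "nat \<Rightarrow> nat \<Rightarrow> nat \<Rightarrow> nat \<Rightarrow> layer list set" where
  "NN L M d0 dL = {\<Phi>. arch d0 \<Phi> dL \<and> depth \<Phi> \<le> L \<and> width d0 \<Phi> \<le> M}"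

end

theory Submission
  imports Defs
begin

(* Yarotsky's sawtooth construction: the sums hat_sum m t of the iterated hat function, weighted
   by 4^-j, approximate the parabola 4 t (1 - t) on [0, 1] within 4^-m, so by polarization x * y
   is approximated within 4^-m by m ReLU layers of constant width. Running the three-term
   recursion T_(k+2) = 2 x T_(k+1) - T_k with these approximate products (clipping the arguments
   back to [-1, 1]) multiplies the error by at most 5 per step, so T_k is obtained within
   5^k / 4^m. Each recursion step is a block of m + 2 layers that carries x, the last two
   approximations and the partial sums of sum_k a_k T_k. Taking m about log_4 (n M 5^n / eps),
   with M the largest |a_k|, gives depth O(n^2 + n log (1/eps) + n log M), and every weight is a
   small constant or a coefficient a_k. *)

section \<open>Sawtooth approximation of products\<close>

definition hat :: "real \<Rightarrow> real" where
  "hat t = 1 - \<bar>2 * t - 1\<bar>"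

definition hat_sum :: "nat \<Rightarrow> real \<Rightarrow> real" where
  "hat_sum m t = (\<Sum>j<m. (hat ^^ Suc j) t / 4 ^ j)"

lemma hat_symmetric: "hat (1 - t) = hat t"
  by (simp add: hat_def abs_if)

lemma funpow_hat_range: "0 \<le> t \<Longrightarrow> t \<le> 1 \<Longrightarrow> 0 \<le> (hat ^^ j) t \<and> (hat ^^ j) t \<le> 1"
  by (induction j) (auto simp: hat_def)

lemma hat_sum_nonneg: "0 \<le> t \<Longrightarrow> t \<le> 1 \<Longrightarrow> 0 \<le> hat_sum m t"
  unfolding hat_sum_def by (intro sum_nonneg divide_nonneg_pos) (simp_all add: funpow_hat_range del: funpow.simps)

lemma hat_sum_Suc: "hat_sum (Suc m) t = hat_sum m t + hat ((hat ^^ m) t) / 4 ^ m"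
  by (simp add: hat_sum_def)

lemma hat_sum_symmetric: "hat_sum m (1 - t) = hat_sum m t"
  by (simp add: hat_sum_def funpow_Suc_right hat_symmetric del: funpow.simps)

lemma hat_sum_Suc_left_half:
  assumes "0 \<le> t" "t \<le> 1/2"
  shows "hat_sum (Suc m) t = 2 * t + hat_sum m (2 * t) / 4"
proof -
  have hat_t: "hat t = 2 * t"
    using assms by (simp add: hat_def)
  have "hat_sum (Suc m) t = hat t + (\<Sum>j<m. (hat ^^ Suc j) (hat t) / 4 ^ Suc j)"
    unfolding hat_sum_def sum.lessThan_Suc_shift by (simp add: funpow_Suc_right del: funpow.simps)
  also have "\<dots> = 2 * t + hat_sum m (2 * t) / 4"
    by (simp add: hat_t hat_sum_def sum_divide_distrib ac_simps)
  finally show ?thesis .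
qed

lemma hat_sum_approx_parabola:
  "0 \<le> t \<Longrightarrow> t \<le> 1 \<Longrightarrow> 0 \<le> 4 * t * (1 - t) - hat_sum m t \<and> 4 * t * (1 - t) - hat_sum m t \<le> 1 / 4 ^ m"
proof (induction m arbitrary: t)
  case 0
  have "4 * t * (1 - t) \<le> 1"
    using sum_squares_ge_zero[of "2 * t - 1" 0] by (simp add: power2_eq_square algebra_simps)
  then show ?case
    using 0 by (simp add: hat_sum_def)
next
  case (Suc m)
  have left_half: "0 \<le> 4 * t * (1 - t) - hat_sum (Suc m) t \<and> 4 * t * (1 - t) - hat_sum (Suc m) t \<le> 1 / 4 ^ Suc m"
    if "0 \<le> t" "t \<le> 1/2" for t
  proof -
    have "4 * t * (1 - t) - hat_sum (Suc m) t = (4 * (2 * t) * (1 - 2 * t) - hat_sum m (2 * t)) / 4"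
      using hat_sum_Suc_left_half[OF that] by (simp add: algebra_simps)
    then show ?thesis
      using Suc.IH[of "2 * t"] that by simp
  qed
  show ?case
  proof (cases "t \<le> 1/2")
    case True
    then show ?thesis using left_half Suc.prems by blast
  next
    case False
    then show ?thesis
      using left_half[of "1 - t"] Suc.prems hat_sum_symmetric[of "Suc m" t] by (simp add: algebra_simps)
  qed
qed

definition mult_approx :: "nat \<Rightarrow> real \<Rightarrow> real \<Rightarrow> real" where
  "mult_approx m x y = hat_sum m ((x - y + 2) / 4) - hat_sum m ((x + y + 2) / 4)"

lemma mult_approx_error:
  assumes "\<bar>x\<bar> \<le> 1" "\<bar>y\<bar> \<le> 1"
  shows "\<bar>mult_approx m x y - x * y\<bar> \<le> 1 / 4 ^ m"
proof -
  define u where "u = (x + y + 2) / 4"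
  define w where "w = (x - y + 2) / 4"
  have polarization: "x * y = 4 * w * (1 - w) - 4 * u * (1 - u)"
    by (simp add: u_def w_def field_simps)
  show ?thesis
    using hat_sum_approx_parabola[of u m] hat_sum_approx_parabola[of w m] assms
    unfolding mult_approx_def polarization u_def[symmetric] w_def[symmetric]
    by (simp add: u_def w_def abs_le_iff)
qed

section \<open>Approximate Chebyshev recursion\<close>

lemma cheb_0: "cheb 0 x = 1"
  by (simp add: cheb_def)

lemma cheb_1: "\<bar>x\<bar> \<le> 1 \<Longrightarrow> cheb 1 x = x"
  by (simp add: cheb_def cos_arccos_abs)

lemma abs_cheb_le_1: "\<bar>cheb k x\<bar> \<le> 1"
  by (simp add: cheb_def)

lemma cheb_Suc_Suc:
  assumes "\<bar>x\<bar> \<le> 1"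
  shows "cheb (Suc (Suc k)) x = 2 * x * cheb (Suc k) x - cheb k x"
proof -
  define \<theta> where "\<theta> = arccos x"
  have "cos \<theta> = x"
    using assms by (simp add: \<theta>_def cos_arccos_abs)
  moreover have "real (Suc (Suc k)) * \<theta> = real (Suc k) * \<theta> + \<theta>" "real k * \<theta> = real (Suc k) * \<theta> - \<theta>"
    by (simp_all add: algebra_simps)
  ultimately show ?thesis
    unfolding cheb_def \<theta>_def[symmetric] by (simp add: cos_add cos_diff)
qed

definition clip :: "real \<Rightarrow> real" where
  "clip z = max (-1) (min 1 z)"

lemma abs_clip_le_1: "\<bar>clip z\<bar> \<le> 1"
  by (auto simp: clip_def)

lemma clip_dist_le: "\<bar>c\<bar> \<le> 1 \<Longrightarrow> \<bar>clip z - c\<bar> \<le> \<bar>z - c\<bar>"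
  by (auto simp: clip_def abs_le_iff)

text \<open>Approximations of \<open>(T\<^sub>k x, T\<^sub>k\<^sub>+\<^sub>1 x)\<close>; clipping keeps the arguments of \<open>mult_approx\<close>
  in \<open>[-1, 1]\<close>, where its error bound holds.\<close>
fun cheb_approx :: "nat \<Rightarrow> real \<Rightarrow> nat \<Rightarrow> real \<times> real" where
  "cheb_approx m x 0 = (1, x)"
| "cheb_approx m x (Suc k) =
     (clip (snd (cheb_approx m x k)),
      2 * mult_approx m x (clip (snd (cheb_approx m x k))) - fst (cheb_approx m x k))"

lemma abs_fst_cheb_approx_le_1: "\<bar>fst (cheb_approx m x k)\<bar> \<le> 1"
  by (cases k) (auto simp: abs_clip_le_1)

lemma cheb_approx_error:
  assumes x: "\<bar>x\<bar> \<le> 1"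
  shows "\<bar>fst (cheb_approx m x k) - cheb k x\<bar> \<le> 5 ^ k / 4 ^ m
    \<and> \<bar>snd (cheb_approx m x k) - cheb (Suc k) x\<bar> \<le> 5 ^ Suc k / 4 ^ m"
proof (induction k)
  case 0
  then show ?case using x cheb_1[OF x] by (simp add: cheb_0)
next
  case (Suc k)
  define y where "y = clip (snd (cheb_approx m x k))"
  define \<delta> :: real where "\<delta> = 1 / 4 ^ m"
  have y_error: "\<bar>y - cheb (Suc k) x\<bar> \<le> 5 ^ Suc k * \<delta>"
    using Suc.IH clip_dist_le[OF abs_cheb_le_1, of "snd (cheb_approx m x k)" "Suc k" x]
    by (simp add: y_def \<delta>_def)
  have prev_error: "\<bar>fst (cheb_approx m x k) - cheb k x\<bar> \<le> 5 ^ k * \<delta>"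
    using Suc.IH by (simp add: \<delta>_def)
  have mult_error: "\<bar>mult_approx m x y - x * y\<bar> \<le> \<delta>"
    using mult_approx_error[OF x abs_clip_le_1] by (simp add: y_def \<delta>_def)
  have scaled_y_error: "\<bar>x * (y - cheb (Suc k) x)\<bar> \<le> 5 ^ Suc k * \<delta>"
    using mult_mono[OF x y_error] by (simp add: abs_mult)
  have "snd (cheb_approx m x (Suc k)) - cheb (Suc (Suc k)) x
      = 2 * (mult_approx m x y - x * y) + 2 * (x * (y - cheb (Suc k) x)) - (fst (cheb_approx m x k) - cheb k x)"
    by (simp add: y_def cheb_Suc_Suc[OF x] algebra_simps)
  also have "\<bar>\<dots>\<bar> \<le> (2 + 2 * 5 ^ Suc k + 5 ^ k) * \<delta>"
    using mult_error scaled_y_error prev_error by (simp add: abs_le_iff algebra_simps)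
  also have "\<dots> \<le> 5 ^ Suc (Suc k) * \<delta>"
  proof (rule mult_right_mono)
    show "2 + 2 * 5 ^ Suc k + 5 ^ k \<le> (5::real) ^ Suc (Suc k)"
      using one_le_power[of "5::real" k] by (simp only: power_Suc) linarith
  qed (simp add: \<delta>_def)
  finally show ?case
    using y_error by (simp add: y_def \<delta>_def)
qed

section \<open>Sparse ReLU layers\<close>

text \<open>A neuron is given by its sparse weight row, a list of (input index, weight) pairs, and its bias.\<close>
type_synonym neuron = "(nat \<times> real) list \<times> real"

definition sparse_dot :: "(nat \<times> real) list \<Rightarrow> real list \<Rightarrow> real" where
  "sparse_dot ws v = (\<Sum>(j, w)\<leftarrow>ws. w * v ! j)"

definition sparse_entry :: "(nat \<times> real) list \<Rightarrow> nat \<Rightarrow> real" where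
  "sparse_entry ws j = (\<Sum>(i, w)\<leftarrow>ws. if i = j then w else 0)"

definition sparse_layer :: "nat \<Rightarrow> neuron list \<Rightarrow> layer" where
  "sparse_layer d ns = (map (\<lambda>(ws, b). map (sparse_entry ws) [0..<d]) ns, map snd ns)"

lemma sparse_dot_simps [simp]:
  "sparse_dot [] v = 0"
  "sparse_dot ((j, w) # ws) v = w * v ! j + sparse_dot ws v"
  by (simp_all add: sparse_dot_def)

lemma sparse_entry_simps [simp]:
  "sparse_entry [] j = 0"
  "sparse_entry ((i, w) # ws) j = (if i = j then w else 0) + sparse_entry ws j"
  by (simp_all add: sparse_entry_def)

lemma sum_sparse_entry:
  "\<forall>(j, w)\<in>set ws. j < d \<Longrightarrow> (\<Sum>j<d. sparse_entry ws j * v ! j) = sparse_dot ws v"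
proof (induction ws)
  case Nil
  then show ?case by simp
next
  case (Cons iw ws)
  obtain i w where iw: "iw = (i, w)" by fastforce
  have "sparse_entry (iw # ws) j * v ! j = (if i = j then w * v ! j else 0) + sparse_entry ws j * v ! j"
    for j by (simp add: iw distrib_right)
  then show ?case
    using Cons by (simp add: iw sum.distrib)
qed

lemma affine_sparse_layer:
  assumes "length v = d" "\<forall>(ws, b)\<in>set ns. \<forall>(j, w)\<in>set ws. j < d"
  shows "affine (sparse_layer d ns) v = map (\<lambda>n. sparse_dot (fst n) v + snd n) ns"
proof -
  have "sum_list (map2 (*) (map (sparse_entry ws) [0..<d]) v) = sparse_dot ws v"
    if "(ws, b) \<in> set ns" for ws b
  proof -
    have "map2 (*) (map (sparse_entry ws) [0..<d]) v = map (\<lambda>j. sparse_entry ws j * v ! j) [0..<d]"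
      using assms(1) by (simp add: list_eq_iff_nth_eq)
    moreover have "\<forall>(j, w)\<in>set ws. j < d"
      using assms(2) that by blast
    ultimately show ?thesis
      by (simp add: sum_sparse_entry sum_set_upt_conv_sum_list_nat[symmetric] atLeast0LessThan)
  qed
  then show ?thesis
    by (auto simp: affine_def sparse_layer_def list_eq_iff_nth_eq split: prod.split) (metis nth_mem)
qed

definition relu_affine :: "real list \<Rightarrow> layer \<Rightarrow> real list" where
  "relu_affine v l = map relu (affine l v)"

lemma realize_snoc: "realize (ls @ [l]) v = affine l (foldl relu_affine v ls)"
proof (induction ls arbitrary: v)
  case (Cons l' ls)
  then show ?case
    by (cases ls) (simp_all add: relu_affine_def)
qed simp

lemma arch_sparse_layer_Cons:
  "ls \<noteq> [] \<Longrightarrow> arch (length ns) ls r \<Longrightarrow> arch d (sparse_layer d ns # ls) r"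
  by (cases ls) (auto simp: sparse_layer_def)

lemma arch_sparse_layers_snoc:
  assumes "\<forall>l\<in>set ls. \<exists>ns. l = sparse_layer d ns \<and> length ns = d" "length ns' = r"
  shows "arch d (ls @ [sparse_layer d ns']) r"
  using assms(1)
proof (induction ls)
  case Nil
  then show ?case
    using assms(2) by (auto simp: sparse_layer_def split: prod.split)
next
  case (Cons l ls)
  then show ?case
    by (auto intro!: arch_sparse_layer_Cons)
qed

lemma width_1_le:
  "1 \<le> M \<Longrightarrow> \<forall>l\<in>set \<Phi>. length (fst l) \<le> M \<Longrightarrow> width 1 \<Phi> \<le> M"
  by (auto simp: width_def)

lemma length_sparse_layer: "length (fst (sparse_layer d ns)) = length ns"
  by (simp add: sparse_layer_def)

text \<open>Distinct indices make each entry of the dense weight matrix a single weight of the row.\<close>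
definition sparse_bounded :: "real \<Rightarrow> neuron list \<Rightarrow> bool" where
  "sparse_bounded B ns =
     (\<forall>(ws, b)\<in>set ns. distinct (map fst ws) \<and> (\<forall>(j, w)\<in>set ws. \<bar>w\<bar> \<le> B) \<and> \<bar>b\<bar> \<le> B)"

lemma sparse_bounded_append:
  "sparse_bounded B (ns @ ns') \<longleftrightarrow> sparse_bounded B ns \<and> sparse_bounded B ns'"
  unfolding sparse_bounded_def by (simp only: set_append ball_Un)

lemma sparse_entry_notin: "j \<notin> fst ` set ws \<Longrightarrow> sparse_entry ws j = 0"
  by (induction ws) auto

lemma abs_sparse_entry_le:
  "distinct (map fst ws) \<Longrightarrow> \<forall>(i, w)\<in>set ws. \<bar>w\<bar> \<le> B \<Longrightarrow> 0 \<le> B \<Longrightarrow> \<bar>sparse_entry ws j\<bar> \<le> B"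
proof (induction ws)
  case (Cons iw ws)
  obtain i w where iw: "iw = (i, w)" by fastforce
  show ?case
  proof (cases "i = j")
    case True
    then have "sparse_entry ws j = 0"
      using Cons.prems(1) by (intro sparse_entry_notin) (auto simp: iw)
    then show ?thesis
      using True Cons.prems by (simp add: iw)
  next
    case False
    then show ?thesis
      using Cons by (simp add: iw)
  qed
qed simp

lemma abs_weights_le:
  assumes "\<forall>l\<in>set \<Phi>. \<exists>d ns. l = sparse_layer d ns \<and> sparse_bounded B ns" "0 \<le> B"
  shows "\<forall>w\<in>set (weights \<Phi>). \<bar>w\<bar> \<le> B"
  using assms abs_sparse_entry_le
  by (fastforce simp: weights_def sparse_layer_def sparse_bounded_def)

definition interleave :: "nat \<Rightarrow> (nat \<Rightarrow> 'a) \<Rightarrow> (nat \<Rightarrow> 'a) \<Rightarrow> 'a list" where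
  "interleave r f g = concat (map (\<lambda>i. [f i, g i]) [0..<r])"

lemma length_interleave [simp]: "length (interleave r f g) = 2 * r"
  by (induction r) (auto simp: interleave_def)

lemma nth_interleave:
  "i < r \<Longrightarrow> interleave r f g ! (2 * i) = f i \<and> interleave r f g ! Suc (2 * i) = g i"
proof (induction r)
  case (Suc r)
  have "interleave (Suc r) f g = interleave r f g @ [f r, g r]"
    by (simp add: interleave_def)
  then show ?case
    using Suc by (cases "i = r") (simp_all add: nth_append)
qed simp

lemma map_interleave: "map h (interleave r f g) = interleave r (h \<circ> f) (h \<circ> g)"
  by (simp add: interleave_def map_concat o_def)

lemma interleave_cong:
  "(\<And>i. i < r \<Longrightarrow> f i = f' i) \<Longrightarrow> (\<And>i. i < r \<Longrightarrow> g i = g' i) \<Longrightarrow> interleave r f g = interleave r f' g'"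
  unfolding interleave_def by (intro arg_cong[where f = concat] map_cong) auto

lemma set_interleave: "set (interleave r f g) = f ` {..<r} \<union> g ` {..<r}"
  by (auto simp: interleave_def)

section \<open>The Chebyshev network\<close>

lemma relu_of_nonneg: "0 \<le> t \<Longrightarrow> relu t = t"
  by (simp add: relu_def)

lemma relu_nonneg: "0 \<le> relu t"
  by (simp add: relu_def)

lemma relu_minus_relu_uminus: "relu t - relu (- t) = t"
  by (simp add: relu_def)

lemma relu_diff_eq_clip: "relu (q + 1) - relu (q - 1) = clip q + 1"
  by (simp add: relu_def clip_def)

lemma hat_eq_relu: "hat g = 1 - relu (2 * g - 1) - relu (1 - 2 * g)"
  by (simp add: relu_def hat_def)

definition pos_neg_parts :: "nat \<Rightarrow> (nat \<Rightarrow> real) \<Rightarrow> real list" where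
  "pos_neg_parts r S = interleave r (\<lambda>i. relu (S i)) (\<lambda>i. relu (- S i))"

lemma nth_append_pos_neg_parts:
  "length L = 9 \<Longrightarrow> i < r \<Longrightarrow>
    (L @ pos_neg_parts r S) ! (9 + 2 * i) = relu (S i) \<and> (L @ pos_neg_parts r S) ! (10 + 2 * i) = relu (- S i)"
  using nth_interleave[of i r] by (simp add: nth_append pos_neg_parts_def)

text \<open>The state between two recursion blocks: \<open>x + 1\<close>, \<open>p + 1\<close> for the previous Chebyshev
  approximation \<open>p\<close>, the pair \<open>a = relu (q + 1)\<close>, \<open>b = relu (q - 1)\<close> with \<open>a - b - 1 = clip q\<close>
  for the raw current approximation \<open>q\<close>, five idle neurons, and the partial sums \<open>S i\<close> split
  into positive and negative parts. All entries are nonnegative, so ReLU passes them on unchanged.\<close>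
definition block_state :: "nat \<Rightarrow> real \<Rightarrow> real \<Rightarrow> real \<Rightarrow> real \<Rightarrow> (nat \<Rightarrow> real) \<Rightarrow> real list" where
  "block_state r x p a b S = [x + 1, p + 1, a, b, 0, 0, 0, 0, 0] @ pos_neg_parts r S"

text \<open>The state inside the product block for \<open>mult_approx m x y\<close>, after \<open>s\<close> sawtooth layers: for
  each polarization point \<open>t\<close> the iterate \<open>g = (hat ^^ s) t\<close> is held as the pair
  \<open>relu (2 g - 1)\<close>, \<open>relu (1 - 2 g)\<close>, from which the next layer reads off \<open>hat g\<close>,
  followed by the partial sum \<open>hat_sum s t\<close>.\<close>
definition mult_state :: "nat \<Rightarrow> real \<Rightarrow> real \<Rightarrow> real \<Rightarrow> nat \<Rightarrow> (nat \<Rightarrow> real) \<Rightarrow> real list" where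
  "mult_state r x p y s S = [x + 1, p + 1, y + 1,
     relu (2 * (hat ^^ s) ((x + y + 2) / 4) - 1), relu (1 - 2 * (hat ^^ s) ((x + y + 2) / 4)),
     hat_sum s ((x + y + 2) / 4),
     relu (2 * (hat ^^ s) ((x - y + 2) / 4) - 1), relu (1 - 2 * (hat ^^ s) ((x - y + 2) / 4)),
     hat_sum s ((x - y + 2) / 4)] @ pos_neg_parts r S"

lemma length_block_state [simp]: "length (block_state r x p a b S) = 9 + 2 * r"
  by (simp add: block_state_def pos_neg_parts_def)

lemma length_mult_state [simp]: "length (mult_state r x p y s S) = 9 + 2 * r"
  by (simp add: mult_state_def pos_neg_parts_def)

definition carry_neurons :: "nat \<Rightarrow> neuron list" where
  "carry_neurons r = interleave r (\<lambda>i. ([(9 + 2 * i, 1)], 0)) (\<lambda>i. ([(10 + 2 * i, 1)], 0))"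

definition accumulate_neurons :: "nat \<Rightarrow> (nat \<Rightarrow> real) \<Rightarrow> neuron list" where
  "accumulate_neurons r c = interleave r
     (\<lambda>i. ([(9 + 2 * i, 1), (10 + 2 * i, -1), (2, c i)], - c i))
     (\<lambda>i. ([(9 + 2 * i, -1), (10 + 2 * i, 1), (2, - c i)], c i))"

lemma length_carry_neurons [simp]: "length (carry_neurons r) = 2 * r"
  by (simp add: carry_neurons_def)

lemma length_accumulate_neurons [simp]: "length (accumulate_neurons r c) = 2 * r"
  by (simp add: accumulate_neurons_def)

lemma carry_neurons_indices: "\<forall>(ws, b)\<in>set (carry_neurons r). \<forall>(j, w)\<in>set ws. j < 9 + 2 * r"
  by (auto simp: carry_neurons_def set_interleave)

lemma accumulate_neurons_indices: "\<forall>(ws, b)\<in>set (accumulate_neurons r c). \<forall>(j, w)\<in>set ws. j < 9 + 2 * r"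
  by (auto simp: accumulate_neurons_def set_interleave)

lemma relu_carry_neurons:
  assumes "length L = 9"
  shows "map (\<lambda>n. relu (sparse_dot (fst n) (L @ pos_neg_parts r S) + snd n)) (carry_neurons r) = pos_neg_parts r S"
  unfolding carry_neurons_def map_interleave pos_neg_parts_def[of r S]
  by (rule interleave_cong)
    (simp_all add: nth_append_pos_neg_parts[OF assms, unfolded pos_neg_parts_def] relu_of_nonneg relu_nonneg)

lemma relu_accumulate_neurons:
  assumes "length L = 9"
  shows "map (\<lambda>n. relu (sparse_dot (fst n) (L @ pos_neg_parts r S) + snd n)) (accumulate_neurons r c)
    = pos_neg_parts r (\<lambda>i. S i + c i * (L ! 2 - 1))"
proof -
  define V where "V = L @ pos_neg_parts r S"
  have V_2: "V ! 2 = L ! 2"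
    using assms by (simp add: V_def nth_append)
  have V_pos: "V ! (9 + 2 * i) = S i + V ! (10 + 2 * i)" if "i < r" for i
    using nth_append_pos_neg_parts[OF assms that] relu_minus_relu_uminus[of "S i"] by (simp add: V_def)
  show ?thesis
    unfolding V_def[symmetric] accumulate_neurons_def map_interleave
      pos_neg_parts_def[of r "\<lambda>i. S i + c i * (L ! 2 - 1)"]
    by (intro interleave_cong; simp add: V_2 V_pos; simp add: algebra_simps)
qed

definition mult_entry_layer :: "nat \<Rightarrow> neuron list" where
  "mult_entry_layer r = [([(0, 1)], 0), ([(1, 1)], 0), ([(2, 1), (3, -1)], 0),
     ([(0, 1/2), (2, 1/2), (3, -1/2)], -1), ([(0, -1/2), (2, -1/2), (3, 1/2)], 1), ([], 0),
     ([(0, 1/2), (2, -1/2), (3, 1/2)], 0), ([(0, -1/2), (2, 1/2), (3, -1/2)], 0), ([], 0)]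
     @ carry_neurons r"

lemma relu_affine_mult_entry_layer:
  assumes "\<bar>x\<bar> \<le> 1" "\<bar>y\<bar> \<le> 1" "\<bar>p\<bar> \<le> 1" "a - b = y + 1"
  shows "relu_affine (block_state r x p a b S) (sparse_layer (9 + 2 * r) (mult_entry_layer r))
    = mult_state r x p y 0 S"
proof -
  have indices: "\<forall>(ws, b)\<in>set (mult_entry_layer r). \<forall>(j, w)\<in>set ws. j < 9 + 2 * r"
    using carry_neurons_indices[of r] by (auto simp: mult_entry_layer_def)
  show ?thesis
    unfolding relu_affine_def affine_sparse_layer[OF length_block_state indices]
    unfolding block_state_def mult_entry_layer_def map_map map_append o_def
    using assms
    by (subst relu_carry_neurons; simp add: mult_state_def relu_of_nonneg hat_sum_def;
        intro conjI arg_cong[where f = relu]; simp add: field_simps)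
qed

definition saw_layer :: "nat \<Rightarrow> nat \<Rightarrow> neuron list" where
  "saw_layer r s = [([(0, 1)], 0), ([(1, 1)], 0), ([(2, 1)], 0),
     ([(3, -2), (4, -2)], 1), ([(3, 2), (4, 2)], -1), ([(5, 1), (3, -1 / 4 ^ s), (4, -1 / 4 ^ s)], 1 / 4 ^ s),
     ([(6, -2), (7, -2)], 1), ([(6, 2), (7, 2)], -1), ([(8, 1), (6, -1 / 4 ^ s), (7, -1 / 4 ^ s)], 1 / 4 ^ s)]
     @ carry_neurons r"

lemma relu_affine_saw_layer:
  assumes "\<bar>x\<bar> \<le> 1" "\<bar>y\<bar> \<le> 1" "\<bar>p\<bar> \<le> 1"
  shows "relu_affine (mult_state r x p y s S) (sparse_layer (9 + 2 * r) (saw_layer r s))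
    = mult_state r x p y (Suc s) S"
proof -
  have indices: "\<forall>(ws, b)\<in>set (saw_layer r s). \<forall>(j, w)\<in>set ws. j < 9 + 2 * r"
    using carry_neurons_indices[of r] by (auto simp: saw_layer_def)
  define u where "u = (x + y + 2) / 4"
  define w where "w = (x - y + 2) / 4"
  have u_w_range: "0 \<le> u" "u \<le> 1" "0 \<le> w" "w \<le> 1"
    using assms by (auto simp: u_def w_def)
  define g where "g = (hat ^^ s) u"
  define h where "h = (hat ^^ s) w"
  have "0 \<le> hat_sum s u" "0 \<le> hat_sum s w" "0 \<le> hat_sum (Suc s) u" "0 \<le> hat_sum (Suc s) w"
    using hat_sum_nonneg u_w_range by auto
  then have next_state: "mult_state r x p y (Suc s) S = [x + 1, p + 1, y + 1,
      relu (2 * hat g - 1), relu (1 - 2 * hat g), relu (hat_sum s u + hat g / 4 ^ s),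
      relu (2 * hat h - 1), relu (1 - 2 * hat h), relu (hat_sum s w + hat h / 4 ^ s)] @ pos_neg_parts r S"
    by (simp add: mult_state_def u_def[symmetric] w_def[symmetric] g_def h_def hat_sum_Suc relu_of_nonneg)
  have state: "mult_state r x p y s S = [x + 1, p + 1, y + 1,
      relu (2 * g - 1), relu (1 - 2 * g), hat_sum s u,
      relu (2 * h - 1), relu (1 - 2 * h), hat_sum s w] @ pos_neg_parts r S"
    by (simp add: mult_state_def u_def[symmetric] w_def[symmetric] g_def h_def)
  show ?thesis
    unfolding relu_affine_def affine_sparse_layer[OF length_mult_state indices]
    unfolding next_state state saw_layer_def map_map map_append o_def
    using assms \<open>0 \<le> hat_sum s u\<close> \<open>0 \<le> hat_sum s w\<close>
    by (subst relu_carry_neurons; simp add: relu_of_nonneg hat_eq_relu[of g] hat_eq_relu[of h];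
        intro conjI arg_cong[where f = relu]; simp add: field_simps)
qed

definition recursion_layer :: "nat \<Rightarrow> (nat \<Rightarrow> real) \<Rightarrow> neuron list" where
  "recursion_layer r c = [([(0, 1)], 0), ([(2, 1)], 0), ([(8, 2), (5, -2), (1, -1)], 2), ([(8, 2), (5, -2), (1, -1)], 0),
     ([], 0), ([], 0), ([], 0), ([], 0), ([], 0)] @ accumulate_neurons r c"

lemma relu_affine_recursion_layer:
  assumes "\<bar>x\<bar> \<le> 1" "\<bar>y\<bar> \<le> 1" "\<bar>p\<bar> \<le> 1"
  shows "relu_affine (mult_state r x p y m S) (sparse_layer (9 + 2 * r) (recursion_layer r c))
    = block_state r x y (relu (2 * mult_approx m x y - p + 1)) (relu (2 * mult_approx m x y - p - 1))
        (\<lambda>i. S i + c i * y)"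
proof -
  have indices: "\<forall>(ws, b)\<in>set (recursion_layer r c). \<forall>(j, w)\<in>set ws. j < 9 + 2 * r"
    using accumulate_neurons_indices[of r c] by (auto simp: recursion_layer_def)
  define u where "u = (x + y + 2) / 4"
  define w where "w = (x - y + 2) / 4"
  define L where "L = [x + 1, p + 1, y + 1, relu (2 * (hat ^^ m) u - 1), relu (1 - 2 * (hat ^^ m) u), hat_sum m u,
     relu (2 * (hat ^^ m) w - 1), relu (1 - 2 * (hat ^^ m) w), hat_sum m w]"
  have state: "mult_state r x p y m S = L @ pos_neg_parts r S"
    by (simp add: mult_state_def u_def w_def L_def)
  have "length L = 9"
    by (simp add: L_def)
  then have accumulate: "map (\<lambda>n. relu (sparse_dot (fst n) (L @ pos_neg_parts r S) + snd n)) (accumulate_neurons r c)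
      = pos_neg_parts r (\<lambda>i. S i + c i * y)"
    using relu_accumulate_neurons[of L r S c] by (simp add: L_def)
  have "mult_approx m x y = hat_sum m w - hat_sum m u"
    by (simp add: mult_approx_def u_def w_def)
  then show ?thesis
    unfolding relu_affine_def state affine_sparse_layer[OF length_mult_state[of r x p y m S, unfolded state] indices]
    unfolding recursion_layer_def map_map map_append o_def accumulate block_state_def
    using assms
    by (simp add: relu_of_nonneg L_def; intro conjI arg_cong[where f = relu]; simp add: field_simps)
qed

definition input_layer :: "nat \<Rightarrow> (nat \<Rightarrow> real) \<Rightarrow> neuron list" where
  "input_layer r c = [([(0, 1)], 1), ([], 2), ([(0, 1)], 1), ([(0, 1)], -1), ([], 0), ([], 0), ([], 0), ([], 0), ([], 0)]
     @ interleave r (\<lambda>i. ([], c i)) (\<lambda>i. ([], - c i))"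

lemma relu_affine_input_layer:
  assumes "\<bar>x\<bar> \<le> 1"
  shows "relu_affine [x] (sparse_layer 1 (input_layer r c)) = block_state r x 1 (relu (x + 1)) (relu (x - 1)) c"
proof -
  have indices: "\<forall>(ws, b)\<in>set (input_layer r c). \<forall>(j, w)\<in>set ws. j < 1"
    by (auto simp: input_layer_def set_interleave)
  have length_x: "length [x] = 1"
    by simp
  show ?thesis
    unfolding relu_affine_def affine_sparse_layer[OF length_x indices]
    unfolding block_state_def input_layer_def pos_neg_parts_def map_map map_append o_def map_interleave
    using assms by (simp add: relu_of_nonneg add.commute)
qed

definition output_layer :: "nat \<Rightarrow> (nat \<Rightarrow> real) \<Rightarrow> neuron list" where
  "output_layer r c = map (\<lambda>i. ([(9 + 2 * i, 1), (10 + 2 * i, -1), (2, c i), (3, - c i)], - c i)) [0..<r]"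

lemma affine_output_layer:
  "affine (sparse_layer (9 + 2 * r) (output_layer r c)) (block_state r x p a b S)
    = map (\<lambda>i. S i + c i * (a - b - 1)) [0..<r]"
proof -
  have indices: "\<forall>(ws, b)\<in>set (output_layer r c). \<forall>(j, w)\<in>set ws. j < 9 + 2 * r"
    by (auto simp: output_layer_def)
  define L where "L = [x + 1, p + 1, a, b, 0, 0, 0, 0, (0::real)]"
  define V where "V = L @ pos_neg_parts r S"
  have "length L = 9"
    by (simp add: L_def)
  have V_pos: "V ! (9 + 2 * i) = S i + V ! (10 + 2 * i)" if "i < r" for i
    using nth_append_pos_neg_parts[OF \<open>length L = 9\<close> that] relu_minus_relu_uminus[of "S i"]
    by (simp add: V_def)
  have V_a_b: "V ! 2 = a" "V ! 3 = b"
    by (simp_all add: V_def L_def)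
  have state: "block_state r x p a b S = V"
    by (simp add: block_state_def L_def V_def)
  show ?thesis
    unfolding affine_sparse_layer[OF length_block_state indices] unfolding state output_layer_def map_map
    by (intro map_cong refl; simp add: V_pos V_a_b; simp add: algebra_simps)
qed

definition recursion_block :: "nat \<Rightarrow> nat \<Rightarrow> (nat \<Rightarrow> real) \<Rightarrow> layer list" where
  "recursion_block r m c =
     sparse_layer (9 + 2 * r) (mult_entry_layer r)
     # map (\<lambda>s. sparse_layer (9 + 2 * r) (saw_layer r s)) [0..<m]
     @ [sparse_layer (9 + 2 * r) (recursion_layer r c)]"

definition recursion_blocks :: "nat \<Rightarrow> nat \<Rightarrow> nat \<Rightarrow> (nat \<Rightarrow> nat \<Rightarrow> real) \<Rightarrow> layer list" where
  "recursion_blocks r m n c = concat (map (\<lambda>k. recursion_block r m (\<lambda>i. c i (Suc k))) [0..<n - 1])"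

definition cheb_net :: "nat \<Rightarrow> nat \<Rightarrow> nat \<Rightarrow> (nat \<Rightarrow> nat \<Rightarrow> real) \<Rightarrow> layer list" where
  "cheb_net r m n c =
     sparse_layer 1 (input_layer r (\<lambda>i. c i 0))
     # recursion_blocks r m n c
     @ [sparse_layer (9 + 2 * r) (output_layer r (\<lambda>i. c i n))]"

definition net_state :: "nat \<Rightarrow> nat \<Rightarrow> real \<Rightarrow> (nat \<Rightarrow> nat \<Rightarrow> real) \<Rightarrow> nat \<Rightarrow> real list" where
  "net_state r m x c k = block_state r x (fst (cheb_approx m x k))
     (relu (snd (cheb_approx m x k) + 1)) (relu (snd (cheb_approx m x k) - 1))
     (\<lambda>i. \<Sum>l\<le>k. c i l * fst (cheb_approx m x l))"

lemma foldl_saw_layers: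
  assumes "\<bar>x\<bar> \<le> 1" "\<bar>y\<bar> \<le> 1" "\<bar>p\<bar> \<le> 1"
  shows "foldl relu_affine (mult_state r x p y 0 S) (map (\<lambda>s. sparse_layer (9 + 2 * r) (saw_layer r s)) [0..<m])
    = mult_state r x p y m S"
  by (induction m) (simp_all add: relu_affine_saw_layer[OF assms])

lemma foldl_recursion_block:
  assumes x: "\<bar>x\<bar> \<le> 1"
  shows "foldl relu_affine (net_state r m x c k) (recursion_block r m (\<lambda>i. c i (Suc k))) = net_state r m x c (Suc k)"
proof -
  define q where "q = snd (cheb_approx m x k)"
  define p where "p = fst (cheb_approx m x k)"
  define S where "S = (\<lambda>i. \<Sum>l\<le>k. c i l * fst (cheb_approx m x l))"
  have p: "\<bar>p\<bar> \<le> 1"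
    by (simp add: p_def abs_fst_cheb_approx_le_1)
  have relu_q: "relu (q + 1) - relu (q - 1) = clip q + 1"
    by (rule relu_diff_eq_clip)
  have "net_state r m x c k = block_state r x p (relu (q + 1)) (relu (q - 1)) S"
    by (simp add: net_state_def q_def p_def S_def)
  moreover have "net_state r m x c (Suc k) = block_state r x (clip q)
      (relu (2 * mult_approx m x (clip q) - p + 1)) (relu (2 * mult_approx m x (clip q) - p - 1))
      (\<lambda>i. S i + c i (Suc k) * clip q)"
    by (simp add: net_state_def q_def p_def S_def)
  ultimately show ?thesis
    unfolding recursion_block_def
    by (simp add: relu_affine_mult_entry_layer[OF x abs_clip_le_1 p relu_q] foldl_saw_layers[OF x abs_clip_le_1 p]
        relu_affine_recursion_layer[OF x abs_clip_le_1 p])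
qed

lemma foldl_recursion_blocks:
  "\<bar>x\<bar> \<le> 1 \<Longrightarrow> foldl relu_affine (net_state r m x c 0) (recursion_blocks r m (Suc k) c) = net_state r m x c k"
  by (induction k) (simp_all add: recursion_blocks_def foldl_recursion_block)

lemma realize_cheb_net:
  assumes "\<bar>x\<bar> \<le> 1" "1 \<le> n"
  shows "realize (cheb_net r m n c) [x] = map (\<lambda>i. \<Sum>k\<le>n. c i k * fst (cheb_approx m x k)) [0..<r]"
proof -
  obtain k where n: "n = Suc k"
    using assms(2) by (cases n) auto
  have input: "relu_affine [x] (sparse_layer 1 (input_layer r (\<lambda>i. c i 0))) = net_state r m x c 0"
    using relu_affine_input_layer[OF assms(1)] by (simp add: net_state_def)
  have "realize (cheb_net r m n c) [x] = affine (sparse_layer (9 + 2 * r) (output_layer r (\<lambda>i. c i n))) (net_state r m x c k)"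
    unfolding cheb_net_def append_Cons[symmetric] realize_snoc foldl_append foldl_Cons input n
    by (simp only: foldl_recursion_blocks[OF assms(1)])
  also have "\<dots> = map (\<lambda>i. \<Sum>k\<le>n. c i k * fst (cheb_approx m x k)) [0..<r]"
    unfolding net_state_def affine_output_layer n
    by (simp add: relu_diff_eq_clip)
  finally show ?thesis .
qed

lemma set_recursion_block:
  assumes "l \<in> set (recursion_block r m c)"
  obtains "l = sparse_layer (9 + 2 * r) (mult_entry_layer r)"
    | s where "l = sparse_layer (9 + 2 * r) (saw_layer r s)"
    | "l = sparse_layer (9 + 2 * r) (recursion_layer r c)"
  using assms by (auto simp: recursion_block_def)

lemma set_cheb_net:
  assumes "l \<in> set (cheb_net r m n c)"
  obtains "l = sparse_layer 1 (input_layer r (\<lambda>i. c i 0))"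
    | k where "k < n - 1" "l \<in> set (recursion_block r m (\<lambda>i. c i (Suc k)))"
    | "l = sparse_layer (9 + 2 * r) (output_layer r (\<lambda>i. c i n))"
  using assms by (auto simp: cheb_net_def recursion_blocks_def)

lemma recursion_blocks_square:
  "\<forall>l\<in>set (recursion_blocks r m n c). \<exists>ns. l = sparse_layer (9 + 2 * r) ns \<and> length ns = 9 + 2 * r"
proof
  fix l
  assume "l \<in> set (recursion_blocks r m n c)"
  then obtain k where "l \<in> set (recursion_block r m (\<lambda>i. c i (Suc k)))"
    by (auto simp: recursion_blocks_def)
  then show "\<exists>ns. l = sparse_layer (9 + 2 * r) ns \<and> length ns = 9 + 2 * r"
    by (cases rule: set_recursion_block)
      (auto simp: mult_entry_layer_def saw_layer_def recursion_layer_def)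
qed

lemma arch_cheb_net: "arch 1 (cheb_net r m n c) r"
proof -
  have "length (input_layer r (\<lambda>i. c i 0)) = 9 + 2 * r" "length (output_layer r (\<lambda>i. c i n)) = r"
    by (simp_all add: input_layer_def output_layer_def)
  then show ?thesis
    unfolding cheb_net_def using arch_sparse_layers_snoc[OF recursion_blocks_square]
    by (intro arch_sparse_layer_Cons) auto
qed

lemma depth_cheb_net: "depth (cheb_net r m n c) = 2 + (n - 1) * (m + 2)"
  by (simp add: depth_def cheb_net_def recursion_blocks_def recursion_block_def length_concat o_def sum_list_triv)

lemma width_cheb_net: "width 1 (cheb_net r m n c) \<le> 9 + 2 * r"
proof (rule width_1_le)
  show "\<forall>l\<in>set (cheb_net r m n c). length (fst l) \<le> 9 + 2 * r"
    using recursion_blocks_square[of r m n c]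
    by (auto simp: cheb_net_def length_sparse_layer input_layer_def output_layer_def)
qed simp

lemma sparse_bounded_carry_neurons: "1 \<le> B \<Longrightarrow> sparse_bounded B (carry_neurons r)"
  by (auto simp: sparse_bounded_def carry_neurons_def set_interleave)

lemma sparse_bounded_mult_entry_layer: "2 \<le> B \<Longrightarrow> sparse_bounded B (mult_entry_layer r)"
  unfolding mult_entry_layer_def sparse_bounded_append
  using sparse_bounded_carry_neurons[of B r] by (auto simp: sparse_bounded_def)

lemma sparse_bounded_saw_layer: "2 \<le> B \<Longrightarrow> sparse_bounded B (saw_layer r s)"
proof -
  assume "2 \<le> B"
  moreover have "(1::real) / 4 ^ s \<le> 1"
    by simp
  ultimately have "(1::real) / 4 ^ s \<le> B"
    by linarith
  with \<open>2 \<le> B\<close> show ?thesis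
    unfolding saw_layer_def sparse_bounded_append
    using sparse_bounded_carry_neurons[of B r] by (auto simp: sparse_bounded_def)
qed

lemma sparse_bounded_recursion_layer:
  "2 \<le> B \<Longrightarrow> \<forall>i<r. \<bar>c i\<bar> \<le> B \<Longrightarrow> sparse_bounded B (recursion_layer r c)"
  unfolding recursion_layer_def sparse_bounded_append
  by (auto simp: sparse_bounded_def accumulate_neurons_def set_interleave)

lemma sparse_bounded_input_layer:
  "2 \<le> B \<Longrightarrow> \<forall>i<r. \<bar>c i\<bar> \<le> B \<Longrightarrow> sparse_bounded B (input_layer r c)"
  unfolding input_layer_def sparse_bounded_append
  by (auto simp: sparse_bounded_def set_interleave)

lemma sparse_bounded_output_layer:
  "1 \<le> B \<Longrightarrow> \<forall>i<r. \<bar>c i\<bar> \<le> B \<Longrightarrow> sparse_bounded B (output_layer r c)"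
  by (auto simp: sparse_bounded_def output_layer_def)

lemma weights_cheb_net:
  assumes B: "2 \<le> B" and c: "\<forall>i<r. \<forall>k\<le>n. \<bar>c i k\<bar> \<le> B"
  shows "\<forall>w\<in>set (weights (cheb_net r m n c)). \<bar>w\<bar> \<le> B"
proof (rule abs_weights_le)
  show "\<forall>l\<in>set (cheb_net r m n c). \<exists>d ns. l = sparse_layer d ns \<and> sparse_bounded B ns"
  proof
    fix l
    assume "l \<in> set (cheb_net r m n c)"
    then show "\<exists>d ns. l = sparse_layer d ns \<and> sparse_bounded B ns"
    proof (cases rule: set_cheb_net)
      case 1
      have "sparse_bounded B (input_layer r (\<lambda>i. c i 0))"
        using c by (intro sparse_bounded_input_layer[OF B]) auto
      with 1 show ?thesis
        by blast
    next
      case (2 k)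
      have "\<forall>i<r. \<bar>c i (Suc k)\<bar> \<le> B"
        using c 2(1) by auto
      with 2(2) B show ?thesis
        by (cases rule: set_recursion_block)
          (blast intro: sparse_bounded_mult_entry_layer sparse_bounded_saw_layer sparse_bounded_recursion_layer)+
    next
      case 3
      have "sparse_bounded B (output_layer r (\<lambda>i. c i n))"
        using B c by (intro sparse_bounded_output_layer) auto
      with 3 show ?thesis
        by blast
    qed
  qed
qed (use B in simp)

lemma cheb_net_error:
  assumes x: "\<bar>x\<bar> \<le> 1" and n: "1 \<le> n" and i: "i < r" and c: "\<forall>k\<le>n. \<bar>c i k\<bar> \<le> M"
  shows "\<bar>realize (cheb_net r m n c) [x] ! i - (\<Sum>k=0..n. c i k * cheb k x)\<bar> \<le> (n + 1) * M * 5 ^ n / 4 ^ m"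
proof -
  have "realize (cheb_net r m n c) [x] ! i - (\<Sum>k=0..n. c i k * cheb k x)
      = (\<Sum>k=0..n. c i k * (fst (cheb_approx m x k) - cheb k x))"
    using i by (simp add: realize_cheb_net[OF x n] atLeast0AtMost sum_subtractf[symmetric] algebra_simps)
  also have "\<bar>\<dots>\<bar> \<le> (\<Sum>k=0..n. \<bar>c i k\<bar> * \<bar>fst (cheb_approx m x k) - cheb k x\<bar>)"
    unfolding abs_mult[symmetric] by (rule sum_abs)
  also have "\<dots> \<le> (\<Sum>k=0..n. M * (5 ^ n / 4 ^ m))"
  proof (rule sum_mono)
    fix k
    assume k: "k \<in> {0..n}"
    have "\<bar>fst (cheb_approx m x k) - cheb k x\<bar> \<le> 5 ^ k / 4 ^ m"
      using cheb_approx_error[OF x] by blast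
    also have "\<dots> \<le> 5 ^ n / 4 ^ m"
      using k by (intro divide_right_mono power_increasing) auto
    finally show "\<bar>c i k\<bar> * \<bar>fst (cheb_approx m x k) - cheb k x\<bar> \<le> M * (5 ^ n / 4 ^ m)"
      using c k by (intro mult_mono) auto
  qed
  also have "\<dots> = (real n + 1) * M * 5 ^ n / 4 ^ m"
    by simp
  finally show ?thesis .
qed

section \<open>Depth and precision\<close>

lemma exists_precision_exponent:
  fixes K \<epsilon> :: real
  assumes "0 < \<epsilon>" "\<epsilon> < K"
  shows "\<exists>m::nat. K / 4 ^ m \<le> \<epsilon> \<and> real m \<le> ln (K / \<epsilon>) + 1"
proof -
  define m where "m = nat \<lceil>ln (K / \<epsilon>)\<rceil>"
  have "0 < ln (K / \<epsilon>)"
    using assms by simp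
  then have m: "ln (K / \<epsilon>) \<le> real m" "real m \<le> ln (K / \<epsilon>) + 1"
    by (simp_all add: m_def)
  have "K / \<epsilon> = exp (ln (K / \<epsilon>))"
    using assms by simp
  also have "\<dots> \<le> exp (real m)"
    using m(1) by simp
  also have "\<dots> = exp 1 ^ m"
    by (simp add: exp_of_nat_mult[symmetric])
  also have "\<dots> \<le> 4 ^ m"
    using exp_le by (intro power_mono) auto
  finally have "K / 4 ^ m \<le> \<epsilon>"
    using assms by (simp add: field_simps)
  with m(2) show ?thesis
    by blast
qed

lemma depth_estimate:
  fixes K M l :: real
  assumes "1 \<le> n" "real m \<le> ln K + l + 1" "ln K + 5 - 2 * ln M \<le> l"
  shows "real (2 + (n - 1) * (m + 2)) \<le> 2 * (real n ^ 2 + real n * l + real n * ln M)"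
proof -
  have "real (2 + (n - 1) * (m + 2)) \<le> real (2 + n * (m + 2))"
    unfolding of_nat_le_iff by (intro add_left_mono mult_le_mono1) simp
  also have "\<dots> = 2 + real n * (real m + 2)"
    by (simp add: algebra_simps)
  also have "\<dots> \<le> 2 + real n * (ln K + l + 3)"
    using assms(2) by (simp add: mult_left_mono)
  also have "\<dots> \<le> 2 * real n * l + 2 * real n * ln M"
  proof -
    have "2 \<le> real n * (l - ln K - 3 + 2 * ln M)"
      using assms(1,3) mult_mono[of 1 "real n" 2 "l - ln K - 3 + 2 * ln M"] by simp
    then show ?thesis
      by (simp add: algebra_simps)
  qed
  also have "\<dots> \<le> 2 * (real n ^ 2 + real n * l + real n * ln M)"
    by (simp add: algebra_simps)
  finally show ?thesis .
qed

lemma cheb_net_in_NN: "cheb_net r m n c \<in> NN (2 + (n - 1) * (m + 2)) (9 + 2 * r) 1 r"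
  using arch_cheb_net depth_cheb_net width_cheb_net by (simp add: NN_def)

lemma NN_mono_width: "M \<le> M' \<Longrightarrow> NN L M d0 dL \<subseteq> NN L M' d0 dL"
  by (auto simp: NN_def)

lemma eventually_cheb_net:
  assumes n: "1 \<le> n" and M: "0 < M" and c: "\<forall>i<r. \<forall>k\<le>n. \<bar>c i k\<bar> \<le> M"
  shows "\<forall>\<^sub>F \<epsilon> in at_right 0. \<exists>L. \<exists>\<Phi>\<in>NN L (9 + 2 * r) 1 r.
    real L \<le> 2 * (real n ^ 2 + real n * ln (1 / \<epsilon>) + real n * ln M) \<and>
    (\<forall>x. \<bar>x\<bar> \<le> 1 \<longrightarrow> (\<forall>i<r. \<bar>realize \<Phi> [x] ! i - (\<Sum>k=0..n. c i k * cheb k x)\<bar> \<le> \<epsilon> / 2)) \<and>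
    (\<forall>w\<in>set (weights \<Phi>). \<bar>w\<bar> \<le> max M 2)"
proof -
  define K where "K = 2 * (real n + 1) * M * 5 ^ n"
  have "0 < K"
    using M by (simp add: K_def)
  then have "\<forall>\<^sub>F \<epsilon> in at_right 0. \<epsilon> < K"
    unfolding eventually_at_right_field by auto
  moreover have "\<forall>\<^sub>F \<epsilon> in at_right 0. ln \<epsilon> \<le> - (ln K + 5 - 2 * ln M)"
    using ln_at_0 by (simp add: filterlim_at_bot)
  moreover have "\<forall>\<^sub>F \<epsilon> in at_right (0::real). 0 < \<epsilon>"
    by (rule eventually_at_right_less)
  ultimately show ?thesis
  proof eventually_elim
    case (elim \<epsilon>)
    then obtain m where m: "K / 4 ^ m \<le> \<epsilon>" "real m \<le> ln (K / \<epsilon>) + 1"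
      using exists_precision_exponent by blast
    have ln_inv: "ln (1 / \<epsilon>) = - ln \<epsilon>" "ln (K / \<epsilon>) = ln K + ln (1 / \<epsilon>)"
      using elim \<open>0 < K\<close> by (simp_all add: ln_div)
    have "real (2 + (n - 1) * (m + 2)) \<le> 2 * (real n ^ 2 + real n * ln (1 / \<epsilon>) + real n * ln M)"
      using m(2) elim(2) by (intro depth_estimate[OF n, of _ K]) (simp_all add: ln_inv)
    moreover have "\<bar>realize (cheb_net r m n c) [x] ! i - (\<Sum>k=0..n. c i k * cheb k x)\<bar> \<le> \<epsilon> / 2"
      if "\<bar>x\<bar> \<le> 1" "i < r" for x i
    proof -
      have "\<forall>k\<le>n. \<bar>c i k\<bar> \<le> M"
        using c that(2) by blast
      then have "\<bar>realize (cheb_net r m n c) [x] ! i - (\<Sum>k=0..n. c i k * cheb k x)\<bar>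
          \<le> (real n + 1) * M * 5 ^ n / 4 ^ m"
        by (rule cheb_net_error[OF that(1) n that(2)])
      also have "\<dots> \<le> \<epsilon> / 2"
        using m(1) by (simp add: K_def field_simps)
      finally show ?thesis .
    qed
    moreover have "\<forall>w\<in>set (weights (cheb_net r m n c)). \<bar>w\<bar> \<le> max M 2"
      using c by (intro weights_cheb_net) force+
    ultimately show ?case
      using cheb_net_in_NN by blast
  qed
qed

lemma Max_image_pos:
  fixes f :: "nat \<Rightarrow> real"
  assumes "k \<le> n" "f k \<noteq> 0" "\<And>k. 0 \<le> f k"
  shows "0 < Max (f ` {0..n})"
proof -
  have "0 < f k"
    using assms(2) assms(3)[of k] by simp
  also have "f k \<le> Max (f ` {0..n})"
    using assms(1) by simp
  finally show ?thesis .
qed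

lemma real_cheb_sum_network:
  fixes a :: "nat \<Rightarrow> real"
  assumes n: "n \<ge> 1" and a: "\<exists>k\<le>n. a k \<noteq> 0"
  shows "\<forall>\<^sub>F \<epsilon> in at_right 0. \<exists>L::nat. \<exists>\<Phi>\<in>NN L 13 1 1.
    real L \<le> 2 * (real n ^ 2 + real n * ln (1 / \<epsilon>) + real n * ln (Max ((\<lambda>k. \<bar>a k\<bar>) ` {0..n}))) \<and>
    (\<forall>x\<in>{-1<..<1}. \<bar>(\<Sum>k=0..n. a k * cheb k x) - realize \<Phi> [x] ! 0\<bar> \<le> \<epsilon>) \<and>
    (\<forall>w\<in>set (weights \<Phi>). \<bar>w\<bar> \<le> max (Max ((\<lambda>k. \<bar>a k\<bar>) ` {0..n})) 2)"
proof -
  define M where "M = Max ((\<lambda>k. \<bar>a k\<bar>) ` {0..n})"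
  have M: "0 < M"
    using a Max_image_pos[where f = "\<lambda>k. \<bar>a k\<bar>"] by (auto simp: M_def)
  have c: "\<forall>i<1. \<forall>k\<le>n. \<bar>a k\<bar> \<le> M"
    by (simp add: M_def)
  show ?thesis
    unfolding M_def[symmetric]
  proof (rule eventually_mono[OF eventually_cheb_net[OF n M c]], elim exE bexE conjE)
    fix \<epsilon> L \<Phi>
    assume \<Phi>: "\<Phi> \<in> NN L (9 + 2 * 1) 1 1"
      and depth: "real L \<le> 2 * (real n ^ 2 + real n * ln (1 / \<epsilon>) + real n * ln M)"
      and err: "\<forall>x. \<bar>x\<bar> \<le> 1 \<longrightarrow> (\<forall>i<1. \<bar>realize \<Phi> [x] ! i - (\<Sum>k=0..n. a k * cheb k x)\<bar> \<le> \<epsilon> / 2)"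
      and weights: "\<forall>w\<in>set (weights \<Phi>). \<bar>w\<bar> \<le> max M 2"
    have "\<Phi> \<in> NN L 13 1 1"
      using \<Phi> NN_mono_width[of 11 13 L 1 1] by auto
    moreover have "\<bar>(\<Sum>k=0..n. a k * cheb k x) - realize \<Phi> [x] ! 0\<bar> \<le> \<epsilon>" if "x \<in> {-1<..<1}" for x
    proof -
      have "\<bar>realize \<Phi> [x] ! 0 - (\<Sum>k=0..n. a k * cheb k x)\<bar> \<le> \<epsilon> / 2"
        using err[rule_format, of x 0] that by (simp add: abs_le_iff)
      then show ?thesis
        by (subst abs_minus_commute) linarith
    qed
    ultimately show "\<exists>L. \<exists>\<Phi>\<in>NN L 13 1 1.
        real L \<le> 2 * (real n ^ 2 + real n * ln (1 / \<epsilon>) + real n * ln M) \<and>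
        (\<forall>x\<in>{-1<..<1}. \<bar>(\<Sum>k=0..n. a k * cheb k x) - realize \<Phi> [x] ! 0\<bar> \<le> \<epsilon>) \<and>
        (\<forall>w\<in>set (weights \<Phi>). \<bar>w\<bar> \<le> max M 2)"
      using depth weights by blast
  qed
qed

lemma complex_cheb_sum_network:
  fixes a :: "nat \<Rightarrow> complex"
  assumes n: "n \<ge> 1" and a: "\<exists>k\<le>n. a k \<noteq> 0"
  shows "\<forall>\<^sub>F \<epsilon> in at_right 0. \<exists>L::nat. \<exists>\<Phi>\<in>NN L 15 1 2.
    real L \<le> 2 * (real n ^ 2 + real n * ln (1 / \<epsilon>) + real n * ln (Max ((\<lambda>k. cmod (a k)) ` {0..n}))) \<and>
    (\<forall>x\<in>{-1<..<1}. cmod ((\<Sum>k=0..n. a k * complex_of_real (cheb k x))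
        - (complex_of_real (realize \<Phi> [x] ! 0) + \<i> * complex_of_real (realize \<Phi> [x] ! 1))) \<le> \<epsilon>) \<and>
    (\<forall>w\<in>set (weights \<Phi>). \<bar>w\<bar> \<le> max (Max ((\<lambda>k. cmod (a k)) ` {0..n})) 2)"
proof -
  define M where "M = Max ((\<lambda>k. cmod (a k)) ` {0..n})"
  define c :: "nat \<Rightarrow> nat \<Rightarrow> real" where "c i k = (if i = 0 then Re (a k) else Im (a k))" for i k
  have M: "0 < M"
    using a Max_image_pos[where f = "\<lambda>k. cmod (a k)"] by (auto simp: M_def)
  have "cmod (a k) \<le> M" if "k \<le> n" for k
    using that by (simp add: M_def)
  then have c: "\<forall>i<2. \<forall>k\<le>n. \<bar>c i k\<bar> \<le> M"
    using abs_Re_le_cmod abs_Im_le_cmod order_trans by (fastforce simp: c_def)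
  show ?thesis
    unfolding M_def[symmetric]
  proof (rule eventually_mono[OF eventually_cheb_net[OF n M c]], elim exE bexE conjE)
    fix \<epsilon> L \<Phi>
    assume \<Phi>: "\<Phi> \<in> NN L (9 + 2 * 2) 1 2"
      and depth: "real L \<le> 2 * (real n ^ 2 + real n * ln (1 / \<epsilon>) + real n * ln M)"
      and err: "\<forall>x. \<bar>x\<bar> \<le> 1 \<longrightarrow> (\<forall>i<2. \<bar>realize \<Phi> [x] ! i - (\<Sum>k=0..n. c i k * cheb k x)\<bar> \<le> \<epsilon> / 2)"
      and weights: "\<forall>w\<in>set (weights \<Phi>). \<bar>w\<bar> \<le> max M 2"
    have "\<Phi> \<in> NN L 15 1 2"
      using \<Phi> NN_mono_width[of 13 15 L 1 2] by auto
    moreover have "cmod ((\<Sum>k=0..n. a k * complex_of_real (cheb k x))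
        - (complex_of_real (realize \<Phi> [x] ! 0) + \<i> * complex_of_real (realize \<Phi> [x] ! 1))) \<le> \<epsilon>"
      (is "cmod ?z \<le> \<epsilon>") if "x \<in> {-1<..<1}" for x
    proof -
      have "Re ?z = (\<Sum>k=0..n. c 0 k * cheb k x) - realize \<Phi> [x] ! 0"
        "Im ?z = (\<Sum>k=0..n. c 1 k * cheb k x) - realize \<Phi> [x] ! 1"
        by (simp_all add: c_def Re_sum Im_sum)
      moreover have "\<bar>realize \<Phi> [x] ! 0 - (\<Sum>k=0..n. c 0 k * cheb k x)\<bar> \<le> \<epsilon> / 2"
        "\<bar>realize \<Phi> [x] ! 1 - (\<Sum>k=0..n. c 1 k * cheb k x)\<bar> \<le> \<epsilon> / 2"
        using err[rule_format, of x 0] err[rule_format, of x 1] that by (simp_all add: abs_le_iff)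
      ultimately have "\<bar>Re ?z\<bar> + \<bar>Im ?z\<bar> \<le> \<epsilon>"
        by (simp add: abs_minus_commute)
      then show ?thesis
        using cmod_le[of ?z] by linarith
    qed
    ultimately show "\<exists>L. \<exists>\<Phi>\<in>NN L 15 1 2.
        real L \<le> 2 * (real n ^ 2 + real n * ln (1 / \<epsilon>) + real n * ln M) \<and>
        (\<forall>x\<in>{-1<..<1}. cmod ((\<Sum>k=0..n. a k * complex_of_real (cheb k x))
          - (complex_of_real (realize \<Phi> [x] ! 0) + \<i> * complex_of_real (realize \<Phi> [x] ! 1))) \<le> \<epsilon>) \<and>
        (\<forall>w\<in>set (weights \<Phi>). \<bar>w\<bar> \<le> max M 2)"
      using depth weights by blast
  qed
qed

theorem propositionA1:
  shows "\<exists>C>0::real.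
    (\<forall>(n::nat) (a::nat \<Rightarrow> real). n \<ge> 1 \<longrightarrow> (\<exists>k\<le>n. a k \<noteq> 0) \<longrightarrow>
      (\<forall>\<^sub>F \<epsilon> in at_right 0. \<exists>L::nat. \<exists>\<Phi>\<in>NN L 13 1 1.
         real L \<le> C * (real n ^ 2 + real n * ln (1 / \<epsilon>)
                         + real n * ln (Max ((\<lambda>k. \<bar>a k\<bar>) ` {0..n}))) \<and>
         (\<forall>x\<in>{-1<..<1}. \<bar>(\<Sum>k=0..n. a k * cheb k x) - realize \<Phi> [x] ! 0\<bar> \<le> \<epsilon>) \<and>
         (\<forall>w\<in>set (weights \<Phi>). \<bar>w\<bar> \<le> max (Max ((\<lambda>k. \<bar>a k\<bar>) ` {0..n})) 2)))
  \<and> (\<forall>(n::nat) (a::nat \<Rightarrow> complex). n \<ge> 1 \<longrightarrow> (\<exists>k\<le>n. a k \<noteq> 0) \<longrightarrow>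
      (\<forall>\<^sub>F \<epsilon> in at_right 0. \<exists>L::nat. \<exists>\<Phi>\<in>NN L 15 1 2.
         real L \<le> C * (real n ^ 2 + real n * ln (1 / \<epsilon>)
                         + real n * ln (Max ((\<lambda>k. cmod (a k)) ` {0..n}))) \<and>
         (\<forall>x\<in>{-1<..<1}. cmod ((\<Sum>k=0..n. a k * complex_of_real (cheb k x))
              - (complex_of_real (realize \<Phi> [x] ! 0) + \<i> * complex_of_real (realize \<Phi> [x] ! 1))) \<le> \<epsilon>) \<and>
         (\<forall>w\<in>set (weights \<Phi>). \<bar>w\<bar> \<le> max (Max ((\<lambda>k. cmod (a k)) ` {0..n})) 2)))"
  using real_cheb_sum_network complex_cheb_sum_network
  by (intro exI[of _ "2::real"]) auto

end
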